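(* Let $k$ be an infinite field and $n>0$ an integer. Then the action of $\mathrm{SO}_{2n+1}(k)$ on $\mathrm{Q}_{2n}(k)$ described in the context is transitive.
   Context: $\mathrm{Q}_{2n}$ is realized as the closed subscheme of $\mathbb{A}^{2n+2}_k$ given by $q_{2n+2}=0$ and $t_{2n+2}=1$, where $q_{2n+2}=\sum_{i=1}^{n+1}x_ix_{n+1+i}$, $t_{2n+2}(x)=x_{n+1}+x_{2n+2}=B(x,1)$ with $B$ the polar bilinear form of $q_{2n+2}$ and $1$ the vector with $x_{n+1}=x_{2n+2}=1$, other coordinates $0$ (this scheme is isomorphic to the hypersurface $\sum_{i=1}^nx_ix_{n+i}=x_{2n+1}(1-x_{2n+1})$ in $\mathbb{A}^{2n+1}_k$). The group $\mathrm{SO}_{2n+1}$ (kernel of the determinant on the orthogonal group scheme $\mathrm{O}_{2n+1}$ of $q_{2n+1}=\sum_{i=1}^nx_ix_{n+i}+x_{2n+1}^2$) acts on $\mathbb{A}^{2n+2}_k$ via the identification of $\mathrm{O}_{2n+1}$ with the stabilizer of $1$ in $\mathrm{GSO}_{2n+2}$ (the subgroup of similitudes of $q_{2n+2}$ generated by scalars and $\mathrm{SO}_{2n+2}$), using the embedding $(x_1,\dots,x_{2n+1})\mapsto(x_1,\dots,x_n,x_{2n+1},x_{n+1},\dots,x_{2n},x_{2n+1})$; this action preserves $q_{2n+2}$ and $t_{2n+2}$, hence $\mathrm{Q}_{2n}$. *)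

theory Defs
  imports "Jordan_Normal_Form.DL_Rank"
begin

text \<open>Vectors of k^(2n+2) are JNF vectors of dimension 2n+2, indexed 0..2n+1
  (paper coordinate x_i is entry i-1).\<close>

definition q2 :: "nat \<Rightarrow> 'a::field vec \<Rightarrow> 'a" where
  "q2 n x = (\<Sum>i<n+1. x $ i * x $ (n+1+i))"

definition t2 :: "nat \<Rightarrow> 'a::field vec \<Rightarrow> 'a" where
  "t2 n x = x $ n + x $ (2*n+1)"

definition one_vec :: "nat \<Rightarrow> 'a::field vec" where
  "one_vec n = vec (2*n+2) (\<lambda>i. if i = n \<or> i = 2*n+1 then 1 else 0)"

definition Q_points :: "nat \<Rightarrow> 'a::field vec set" where
  "Q_points n = {x \<in> carrier_vec (2*n+2). q2 n x = 0 \<and> t2 n x = 1}"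

definition O_even :: "nat \<Rightarrow> 'a::field mat set" where
  "O_even n = {M \<in> carrier_mat (2*n+2) (2*n+2). invertible_mat M \<and>
      (\<forall>x \<in> carrier_vec (2*n+2). q2 n (M *\<^sub>v x) = q2 n x)}"

text \<open>SO_{2n+2}(k): kernel of the Dickson invariant, computed characteristic-freely
  as rank(M - 1) mod 2 (equals the determinant condition in characteristic not 2).\<close>
definition SO_even :: "nat \<Rightarrow> 'a::field mat set" where
  "SO_even n = {M \<in> O_even n.
      even (vec_space.rank (2*n+2) (M - 1\<^sub>m (2*n+2)))}"

text \<open>Image of SO_{2n+1}(k) acting on k^(2n+2): the stabiliser of 1 in GSO_{2n+2}(k),
  which (as a fixed point of 1 forces multiplier 1) is the stabiliser of 1 in SO_{2n+2}(k).\<close>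
definition SO_odd_image :: "nat \<Rightarrow> 'a::field mat set" where
  "SO_odd_image n = {M \<in> SO_even n. M *\<^sub>v one_vec n = one_vec n}"

end

theory Submission
  imports Defs "Jordan_Normal_Form.DL_Rank_Submatrix" "HOL-Computational_Algebra.Polynomial"
begin

(* Write B for the polar form of q2 and 1 for one_vec n, so that t2 = B(-, 1) and q2 1 = 1.
  For anisotropic a the reflection r_a z = z - B(z, a) / q2 a * a preserves q2 and fixes the
  orthogonal complement of a.  If a and c are anisotropic, orthogonal to 1 and linearly
  independent, then r_a r_c - 1 is a sum of two rank-one matrices with image span {a, c}, so it
  has rank 2; hence r_a r_c has trivial Dickson invariant, fixes 1, and lies in SO_odd_image.

  Given x <> y in Q, pick an anisotropic a orthogonal to 1 such that c = x - r_a y is anisotropic.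
  As x and r_a y are isotropic with t2 = 1, the reflection r_c maps x to r_a y and c is
  orthogonal to 1, so r_a r_c maps x to y (and a, c are independent, as otherwise r_a r_c = 1).
  The condition q2 c <> 0 reads B(a,x) B(a,y) <> B(x,y) q2 a: if B(x,y) <> 0 any such a that is
  also orthogonal to y works, and if B(x,y) = 0 a generic a in the hyperplane t2 = 0 works,
  which is where k has to be infinite. *)

section \<open>Matrices of rank two\<close>

lemma mult_mat_vec_unit_vec_index:
  fixes A :: "'a::semiring_1 mat"
  shows "A \<in> carrier_mat nr nc \<Longrightarrow> i < nr \<Longrightarrow> j < nc \<Longrightarrow> (A *\<^sub>v unit_vec nc j) $ i = A $$ (i,j)"
  by auto

lemma det_dim_2:
  assumes "(A :: 'a::comm_ring_1 mat) \<in> carrier_mat 2 2"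
  shows "det A = A $$ (0,0) * A $$ (1,1) - A $$ (0,1) * A $$ (1,0)"
proof -
  have "det A = A $$ (0,0) * cofactor A 0 0 + A $$ (0,1) * cofactor A 0 1"
    using laplace_expansion_row[OF assms, of 0] by (simp add: numeral_2_eq_2)
  moreover have "cofactor A 0 0 = A $$ (1,1)" "cofactor A 0 1 = - A $$ (1,0)"
    unfolding cofactor_def using assms
    by (subst det_single; force simp: mat_delete_def)+
  ultimately show ?thesis by simp
qed

lemma pick_doubleton:
  assumes "(a::nat) < b"
  shows "pick {a,b} 0 = a" "pick {a,b} (Suc 0) = b"
proof -
  show first: "pick {a,b} 0 = a"
    using assms by (auto intro!: Least_equality)
  show "pick {a,b} (Suc 0) = b"
    unfolding pick.simps(2) first using assms by (auto intro!: Least_equality)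
qed

lemma rank_ge_2_if_minor_ne_0:
  fixes A :: "'a::field mat"
  assumes A: "A \<in> carrier_mat N K"
    and r: "r1 < N" "r2 < N" and j: "j1 < K" "j2 < K"
    and minor: "A $$ (r1,j1) * A $$ (r2,j2) - A $$ (r1,j2) * A $$ (r2,j1) \<noteq> 0"
  shows "2 \<le> vec_space.rank N A"
proof -
  define s1 s2 t1 t2 where "s1 = min r1 r2" "s2 = max r1 r2" "t1 = min j1 j2" "t2 = max j1 j2"
  have "r1 \<noteq> r2" "j1 \<noteq> j2" using minor by auto
  then have st: "s1 < s2" "t1 < t2" unfolding s1_s2_t1_t2_def by auto
  have "A $$ (s1,t1) * A $$ (s2,t2) - A $$ (s1,t2) * A $$ (s2,t1)
      \<in> {A $$ (r1,j1) * A $$ (r2,j2) - A $$ (r1,j2) * A $$ (r2,j1),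
         - (A $$ (r1,j1) * A $$ (r2,j2) - A $$ (r1,j2) * A $$ (r2,j1))}"
    unfolding s1_s2_t1_t2_def by (cases "r1 \<le> r2"; cases "j1 \<le> j2") (simp_all add: algebra_simps)
  with minor have minor': "A $$ (s1,t1) * A $$ (s2,t2) - A $$ (s1,t2) * A $$ (s2,t1) \<noteq> 0"
    by auto
  let ?S = "submatrix A {s1,s2} {t1,t2}"
  have rows: "{i. i < dim_row A \<and> i \<in> {s1,s2}} = {s1,s2}"
    and cols: "{i. i < dim_col A \<and> i \<in> {t1,t2}} = {t1,t2}"
    using A r j unfolding s1_s2_t1_t2_def by auto
  have card: "card {s1,s2} = 2" "card {t1,t2} = 2" using st by auto
  have S: "?S \<in> carrier_mat 2 2"
    by (rule carrier_matI) (simp_all only: dim_submatrix rows cols card)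
  have "?S $$ (k,l) = A $$ (pick {s1,s2} k, pick {t1,t2} l)" if "k < 2" "l < 2" for k l
    using that by (intro submatrix_index) (simp_all only: rows cols card)
  then have "det ?S = A $$ (s1,t1) * A $$ (s2,t2) - A $$ (s1,t2) * A $$ (s2,t1)"
    using st by (simp add: det_dim_2[OF S] pick_doubleton del: pick.simps)
  with minor' vec_space.rank_gt_minor[OF A] have "card {k. k < K \<and> k \<in> {t1,t2}} \<le> vec_space.rank N A"
    by metis
  then show ?thesis
    using cols A card by simp
qed

lemma rank_sum_of_two_rank_one:
  fixes A :: "'a::field mat"
  assumes A: "A \<in> carrier_mat N K"
    and entries: "\<And>r j. r < N \<Longrightarrow> j < K \<Longrightarrow> A $$ (r,j) = u r * w j + u' r * w' j"
    and rows: "i < N" "i' < N" "u i * u' i' - u' i * u i' \<noteq> 0"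
    and cols: "k < K" "k' < K" "w k * w' k' - w' k * w k' \<noteq> 0"
  shows "vec_space.rank N A = 2"
proof -
  define A1 A2 where "A1 = mat N K (\<lambda>(r,j). u r * w j)" "A2 = mat N K (\<lambda>(r,j). u' r * w' j)"
  have A12: "A1 \<in> carrier_mat N K" "A2 \<in> carrier_mat N K" unfolding A1_A2_def by auto
  have "A = A1 + A2"
    using A by (intro eq_matI) (auto simp: A1_A2_def entries)
  moreover have "vec_space.rank N A1 \<le> 1" "vec_space.rank N A2 \<le> 1"
    by (rule vec_space.rank_le_1_product_entries[OF A12(1), of u w], simp add: A1_A2_def)
      (rule vec_space.rank_le_1_product_entries[OF A12(2), of u' w'], simp add: A1_A2_def)
  ultimately have "vec_space.rank N A \<le> 2"
    using vec_space.rank_subadditive[OF A12] by simp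
  moreover have "A $$ (i,k) * A $$ (i',k') - A $$ (i,k') * A $$ (i',k)
      = (u i * u' i' - u' i * u i') * (w k * w' k' - w' k * w k')"
    using rows cols by (simp add: entries algebra_simps)
  then have "2 \<le> vec_space.rank N A"
    using rows cols by (intro rank_ge_2_if_minor_ne_0[OF A rows(1,2) cols(1,2)]) simp
  ultimately show ?thesis by simp
qed

lemma vec_parallel_if_minors_vanish:
  fixes a c :: "'a::field vec"
  assumes a: "a \<in> carrier_vec N" and c: "c \<in> carrier_vec N" and i: "i < N" "a $ i \<noteq> 0"
    and minors: "\<And>r1 r2. r1 < N \<Longrightarrow> r2 < N \<Longrightarrow> c$r1 * a$r2 - a$r1 * c$r2 = 0"
  shows "c = (c$i / a$i) \<cdot>\<^sub>v a"
proof (rule eq_vecI)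
  fix r assume "r < dim_vec ((c$i / a$i) \<cdot>\<^sub>v a)"
  then have "r < N" using a by simp
  with minors[OF i(1) this] show "c $ r = ((c$i / a$i) \<cdot>\<^sub>v a) $ r"
    using a i by (simp add: field_simps)
qed (use a c in simp)

section \<open>Functions that are polynomial along lines\<close>

definition poly_on_lines :: "nat \<Rightarrow> ('a::field vec \<Rightarrow> 'a) \<Rightarrow> bool" where
  "poly_on_lines N f \<longleftrightarrow>
     (\<forall>p \<in> carrier_vec N. \<forall>v \<in> carrier_vec N. \<exists>P. \<forall>t. f (p + t \<cdot>\<^sub>v v) = poly P t)"

lemma poly_on_lines_mult:
  assumes f: "poly_on_lines N f" and g: "poly_on_lines N g"
  shows "poly_on_lines N (\<lambda>z. f z * g z)"
  unfolding poly_on_lines_def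
proof (intro ballI)
  fix p v :: "'a vec" assume "p \<in> carrier_vec N" "v \<in> carrier_vec N"
  then obtain P Q where "\<And>t. f (p + t \<cdot>\<^sub>v v) = poly P t" "\<And>t. g (p + t \<cdot>\<^sub>v v) = poly Q t"
    using f g unfolding poly_on_lines_def by meson
  then show "\<exists>R. \<forall>t. f (p + t \<cdot>\<^sub>v v) * g (p + t \<cdot>\<^sub>v v) = poly R t"
    by (intro exI[of _ "P * Q"]) simp
qed

lemma exists_common_nonzero:
  assumes inf: "infinite (UNIV :: 'a::field set)"
    and f: "poly_on_lines N f" and g: "poly_on_lines N (g :: 'a vec \<Rightarrow> 'a)"
    and S: "S \<subseteq> carrier_vec N" and line: "\<And>p r t. p \<in> S \<Longrightarrow> r \<in> S \<Longrightarrow> p + t \<cdot>\<^sub>v (r - p) \<in> S"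
    and p: "p \<in> S" "f p \<noteq> 0" and r: "r \<in> S" "g r \<noteq> 0"
  shows "\<exists>z \<in> S. f z \<noteq> 0 \<and> g z \<noteq> 0"
proof -
  have pr: "p \<in> carrier_vec N" "r - p \<in> carrier_vec N"
    using S p(1) r(1) by (auto intro: minus_carrier_vec)
  obtain P Q where P: "\<And>t. f (p + t \<cdot>\<^sub>v (r - p)) = poly P t"
    and Q: "\<And>t. g (p + t \<cdot>\<^sub>v (r - p)) = poly Q t"
    using f g pr unfolding poly_on_lines_def by meson
  have "p + 0 \<cdot>\<^sub>v (r - p) = p" "p + 1 \<cdot>\<^sub>v (r - p) = r"
    using pr S r by (auto intro!: eq_vecI)
  then have "poly P 0 \<noteq> 0" "poly Q 1 \<noteq> 0"
    using P[of 0] Q[of 1] p r by auto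
  then have "P * Q \<noteq> 0" by auto
  then have "finite {t. poly (P * Q) t = 0}" by (rule poly_roots_finite)
  then obtain t where "poly (P * Q) t \<noteq> 0"
    using inf by (metis (mono_tags, lifting) UNIV_I ex_new_if_finite mem_Collect_eq)
  then show ?thesis
    using line[OF p(1) r(1), of t] P[of t] Q[of t] by (intro bexI[of _ "p + t \<cdot>\<^sub>v (r - p)"]) auto
qed

section \<open>The polar form of q2\<close>

definition polar :: "nat \<Rightarrow> 'a::field vec \<Rightarrow> 'a vec \<Rightarrow> 'a" where
  "polar n x y = (\<Sum>i<n+1. x$i * y$(n+1+i) + x$(n+1+i) * y$i)"

definition partner :: "nat \<Rightarrow> nat \<Rightarrow> nat" where
  "partner n j = (if j < n+1 then j + (n+1) else j - (n+1))"

lemma partner_less: "j < 2*n+2 \<Longrightarrow> partner n j < 2*n+2"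
  unfolding partner_def by auto

lemma partner_partner: "j < 2*n+2 \<Longrightarrow> partner n (partner n j) = j"
  unfolding partner_def by auto

lemma polar_sym: "polar n x y = polar n y x"
  unfolding polar_def by (rule sum.cong) (auto simp: mult.commute)

lemma polar_self: "polar n x x = 2 * q2 n x"
  unfolding polar_def q2_def sum_distrib_left
  by (rule sum.cong) (auto simp: mult.commute mult_2_right)

lemma polar_add_left:
  assumes "x \<in> carrier_vec (2*n+2)" "y \<in> carrier_vec (2*n+2)"
  shows "polar n (x + y) z = polar n x z + polar n y z"
  using assms unfolding polar_def sum.distrib[symmetric]
  by (intro sum.cong) (auto simp: algebra_simps)

lemma polar_diff_left:
  assumes "x \<in> carrier_vec (2*n+2)" "y \<in> carrier_vec (2*n+2)"
  shows "polar n (x - y) z = polar n x z - polar n y z"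
  using assms unfolding polar_def sum_subtractf[symmetric]
  by (intro sum.cong) (auto simp: algebra_simps)

lemma polar_smult_left:
  assumes "x \<in> carrier_vec (2*n+2)"
  shows "polar n (c \<cdot>\<^sub>v x) z = c * polar n x z"
  using assms unfolding polar_def sum_distrib_left
  by (intro sum.cong) (auto simp: algebra_simps)

lemma polar_diff_right:
  "x \<in> carrier_vec (2*n+2) \<Longrightarrow> y \<in> carrier_vec (2*n+2) \<Longrightarrow> polar n z (x - y) = polar n z x - polar n z y"
  using polar_diff_left polar_sym by metis

lemma polar_smult_right:
  "x \<in> carrier_vec (2*n+2) \<Longrightarrow> polar n z (c \<cdot>\<^sub>v x) = c * polar n z x"
  using polar_smult_left polar_sym by metis

lemma q2_add:
  assumes "x \<in> carrier_vec (2*n+2)" "y \<in> carrier_vec (2*n+2)"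
  shows "q2 n (x + y) = q2 n x + q2 n y + polar n x y"
  using assms unfolding polar_def q2_def sum.distrib[symmetric]
  by (intro sum.cong) (auto simp: algebra_simps)

lemma q2_diff:
  assumes "x \<in> carrier_vec (2*n+2)" "y \<in> carrier_vec (2*n+2)"
  shows "q2 n (x - y) = q2 n x + q2 n y - polar n x y"
  using assms unfolding polar_def q2_def sum.distrib[symmetric] sum_subtractf[symmetric]
  by (intro sum.cong) (auto simp: algebra_simps)

lemma q2_smult:
  assumes "x \<in> carrier_vec (2*n+2)"
  shows "q2 n (c \<cdot>\<^sub>v x) = c^2 * q2 n x"
  using assms unfolding q2_def sum_distrib_left
  by (intro sum.cong) (auto simp: algebra_simps power2_eq_square)

lemma sum_partner_halves: "(\<Sum>j<2*(n::nat)+2. f j) = (\<Sum>i<n+1. f i + f (n+1+i))"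
proof -
  have "(\<Sum>j<2*n+2. f j) = (\<Sum>j<n+1. f j) + (\<Sum>j\<in>{n+1..<2*n+2}. f j)"
    unfolding lessThan_atLeast0 by (rule sum.atLeastLessThan_concat[symmetric]) auto
  also have "(\<Sum>j\<in>{n+1..<2*n+2}. f j) = (\<Sum>i<n+1. f (n+1+i))"
    using sum.shift_bounds_nat_ivl[of f 0 "n+1" "n+1"]
    by (simp add: lessThan_atLeast0 add.commute mult_2)
  finally show ?thesis by (simp add: sum.distrib)
qed

lemma polar_eq_sum_partner:
  assumes "z \<in> carrier_vec (2*n+2)"
  shows "polar n z a = (\<Sum>j<2*n+2. a $ partner n j * z $ j)"
  unfolding sum_partner_halves polar_def partner_def
  by (rule sum.cong) (auto simp: algebra_simps)

lemma polar_unit_vec: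
  assumes "j < 2*n+2"
  shows "polar n (unit_vec (2*n+2) j) a = a $ partner n j"
proof -
  have "polar n (unit_vec (2*n+2) j) a = (\<Sum>k<2*n+2. if k = j then a $ partner n j else 0)"
    unfolding polar_eq_sum_partner[OF unit_vec_carrier] by (rule sum.cong) (auto simp: unit_vec_def)
  then show ?thesis using assms by simp
qed

lemma q2_unit_vec: "q2 n (unit_vec (2*n+2) j) = 0"
  unfolding q2_def by (rule sum.neutral) (auto simp: unit_vec_def)

lemma q2_eq_0_if_vanishing: "(\<And>i. i < 2*n+2 \<Longrightarrow> a $ i = 0) \<Longrightarrow> q2 n a = 0"
  unfolding q2_def by (rule sum.neutral) auto

lemma one_vec_carrier: "one_vec n \<in> carrier_vec (2*n+2)"
  unfolding one_vec_def by simp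

lemma polar_one_vec: "polar n x (one_vec n) = t2 n x"
proof -
  have "polar n x (one_vec n) = (\<Sum>i<n+1. if i = n then x$n + x$(2*n+1) else 0)"
    unfolding polar_def one_vec_def by (rule sum.cong) (auto simp: mult_2)
  then show ?thesis unfolding t2_def by simp
qed

lemma q2_one_vec: "q2 n (one_vec n) = 1"
proof -
  have "q2 n (one_vec n) = (\<Sum>i<n+1. if i = n then 1 else 0)"
    unfolding q2_def one_vec_def by (rule sum.cong) auto
  then show ?thesis by simp
qed

lemma t2_one_vec: "t2 n (one_vec n) = 2"
  unfolding t2_def one_vec_def by simp

lemma t2_add: "x \<in> carrier_vec (2*n+2) \<Longrightarrow> y \<in> carrier_vec (2*n+2) \<Longrightarrow> t2 n (x + y) = t2 n x + t2 n y"
  unfolding t2_def by simp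

lemma t2_diff: "x \<in> carrier_vec (2*n+2) \<Longrightarrow> y \<in> carrier_vec (2*n+2) \<Longrightarrow> t2 n (x - y) = t2 n x - t2 n y"
  unfolding t2_def by simp

lemma t2_smult: "x \<in> carrier_vec (2*n+2) \<Longrightarrow> t2 n (c \<cdot>\<^sub>v x) = c * t2 n x"
  unfolding t2_def by (simp add: algebra_simps)

lemma t2_unit_vec:
  "j < 2*n+2 \<Longrightarrow> t2 n (unit_vec (2*n+2) j) = (if j = n \<or> j = 2*n+1 then 1 else 0)"
  unfolding t2_def by auto

lemma t2_line_eq_0:
  assumes "p \<in> carrier_vec (2*n+2)" "r \<in> carrier_vec (2*n+2)" "t2 n p = 0" "t2 n r = 0"
  shows "t2 n (p + t \<cdot>\<^sub>v (r - p)) = 0"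
proof -
  have "t2 n (p + t \<cdot>\<^sub>v (r - p)) = t2 n p + t * (t2 n r - t2 n p)"
    using assms(1,2) by (simp add: t2_def algebra_simps)
  then show ?thesis using assms(3,4) by simp
qed

lemma Q_pointsD:
  assumes "x \<in> Q_points n"
  shows "x \<in> carrier_vec (2*n+2)" "q2 n x = 0" "t2 n x = 1" "polar n x (one_vec n) = 1"
  using assms unfolding Q_points_def by (auto simp: polar_one_vec)

lemma poly_on_lines_q2: "poly_on_lines (2*n+2) (q2 n)"
  unfolding poly_on_lines_def
proof (intro ballI exI allI)
  fix p v :: "'a vec" and t :: 'a
  assume "p \<in> carrier_vec (2*n+2)" "v \<in> carrier_vec (2*n+2)"
  then show "q2 n (p + t \<cdot>\<^sub>v v) = poly [:q2 n p, polar n p v, q2 n v:] t"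
    by (simp add: q2_add q2_smult polar_smult_right algebra_simps power2_eq_square)
qed

lemma poly_on_lines_polar: "poly_on_lines (2*n+2) (\<lambda>z. polar n z w)"
  unfolding poly_on_lines_def
proof (intro ballI exI allI)
  fix p v :: "'a vec" and t :: 'a
  assume "p \<in> carrier_vec (2*n+2)" "v \<in> carrier_vec (2*n+2)"
  then show "polar n (p + t \<cdot>\<^sub>v v) w = poly [:polar n p w, polar n v w:] t"
    by (simp add: polar_add_left polar_smult_left algebra_simps)
qed

section \<open>Reflections\<close>

definition refl_mat :: "nat \<Rightarrow> 'a::field vec \<Rightarrow> 'a mat" where
  "refl_mat n a = mat (2*n+2) (2*n+2)
     (\<lambda>(i,j). (if i = j then 1 else 0) - a$i * a$(partner n j) / q2 n a)"

lemma refl_mat_carrier: "refl_mat n a \<in> carrier_mat (2*n+2) (2*n+2)"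
  unfolding refl_mat_def by simp

lemma refl_mat_mult_vec:
  assumes a: "a \<in> carrier_vec (2*n+2)" and z: "z \<in> carrier_vec (2*n+2)"
  shows "refl_mat n a *\<^sub>v z = z - (polar n z a / q2 n a) \<cdot>\<^sub>v a"
proof (rule eq_vecI)
  fix i assume "i < dim_vec (z - (polar n z a / q2 n a) \<cdot>\<^sub>v a)"
  then have i: "i < 2*n+2" using a by simp
  have "(refl_mat n a *\<^sub>v z) $ i
      = (\<Sum>j<2*n+2. (if i = j then z$j else 0) - a$i / q2 n a * (a $ partner n j * z$j))"
    using i z by (auto simp: refl_mat_def scalar_prod_def lessThan_atLeast0 algebra_simps
        intro!: sum.cong)
  also have "\<dots> = (\<Sum>j<2*n+2. if i = j then z$j else 0)
      - a$i / q2 n a * (\<Sum>j<2*n+2. a $ partner n j * z$j)"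
    by (simp only: sum_subtractf sum_distrib_left)
  also have "(\<Sum>j<2*n+2. if i = j then z$j else 0) = z$i"
    using i by (simp only: sum.delta' finite_lessThan) simp
  also have "(\<Sum>j<2*n+2. a $ partner n j * z$j) = polar n z a"
    by (simp only: polar_eq_sum_partner[OF z])
  finally show "(refl_mat n a *\<^sub>v z) $ i = (z - (polar n z a / q2 n a) \<cdot>\<^sub>v a) $ i"
    using i a z by simp
qed (use a z in \<open>simp add: refl_mat_def\<close>)

lemma q2_refl_mat:
  assumes "a \<in> carrier_vec (2*n+2)" "z \<in> carrier_vec (2*n+2)" "q2 n a \<noteq> 0"
  shows "q2 n (refl_mat n a *\<^sub>v z) = q2 n z"
  using assms by (simp add: refl_mat_mult_vec q2_diff q2_smult polar_smult_right
      field_simps power2_eq_square)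

lemma polar_refl_mat:
  assumes "a \<in> carrier_vec (2*n+2)" "z \<in> carrier_vec (2*n+2)"
  shows "polar n (refl_mat n a *\<^sub>v z) w = polar n z w - polar n z a / q2 n a * polar n a w"
  using assms by (simp add: refl_mat_mult_vec polar_diff_left polar_smult_left)

lemma t2_refl_mat:
  assumes "a \<in> carrier_vec (2*n+2)" "z \<in> carrier_vec (2*n+2)"
  shows "t2 n (refl_mat n a *\<^sub>v z) = t2 n z - polar n z a / q2 n a * t2 n a"
  using polar_refl_mat[OF assms, of "one_vec n"] by (simp only: polar_one_vec)

lemma refl_mat_fixes_orthogonal:
  assumes "a \<in> carrier_vec (2*n+2)" "z \<in> carrier_vec (2*n+2)" "polar n z a = 0"
  shows "refl_mat n a *\<^sub>v z = z"
  using assms by (auto simp: refl_mat_mult_vec)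

lemma refl_mat_involutive:
  assumes a: "a \<in> carrier_vec (2*n+2)" and z: "z \<in> carrier_vec (2*n+2)" and "q2 n a \<noteq> 0"
  shows "refl_mat n a *\<^sub>v (refl_mat n a *\<^sub>v z) = z"
proof -
  have Rz: "refl_mat n a *\<^sub>v z \<in> carrier_vec (2*n+2)"
    using refl_mat_carrier z by (rule mult_mat_vec_carrier)
  have "polar n (refl_mat n a *\<^sub>v z) a = - polar n z a"
    using assms by (simp add: polar_refl_mat polar_self)
  then have "refl_mat n a *\<^sub>v (refl_mat n a *\<^sub>v z)
      = (z - (polar n z a / q2 n a) \<cdot>\<^sub>v a) + (polar n z a / q2 n a) \<cdot>\<^sub>v a"
    using a z Rz by (intro eq_vecI) (auto simp: refl_mat_mult_vec[OF a])
  then show ?thesis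
    using a z by (auto intro!: eq_vecI)
qed

lemma refl_mat_mult_self:
  assumes "a \<in> carrier_vec (2*n+2)" "q2 n a \<noteq> 0"
  shows "refl_mat n a * refl_mat n a = 1\<^sub>m (2*n+2)"
proof (rule eq_matI)
  fix i j assume ij: "i < dim_row (1\<^sub>m (2*n+2) :: 'a mat)" "j < dim_col (1\<^sub>m (2*n+2) :: 'a mat)"
  have "(refl_mat n a * refl_mat n a) $$ (i,j)
      = ((refl_mat n a * refl_mat n a) *\<^sub>v unit_vec (2*n+2) j) $ i"
    by (rule mult_mat_vec_unit_vec_index[symmetric, OF mult_carrier_mat[OF refl_mat_carrier refl_mat_carrier]])
      (use ij in auto)
  also have "\<dots> = (refl_mat n a *\<^sub>v (refl_mat n a *\<^sub>v unit_vec (2*n+2) j)) $ i"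
    by (metis assoc_mult_mat_vec refl_mat_carrier unit_vec_carrier)
  also have "\<dots> = 1\<^sub>m (2*n+2) $$ (i,j)"
    using ij assms by (simp add: refl_mat_involutive)
  finally show "(refl_mat n a * refl_mat n a) $$ (i,j) = 1\<^sub>m (2*n+2) $$ (i,j)" .
qed (simp_all add: refl_mat_def)

lemma refl_mat_smult:
  assumes "a \<in> carrier_vec (2*n+2)" "l \<noteq> 0"
  shows "refl_mat n (l \<cdot>\<^sub>v a) = refl_mat n a"
proof (rule eq_matI)
  fix i j assume "i < dim_row (refl_mat n a)" "j < dim_col (refl_mat n a)"
  moreover then have "partner n j < dim_vec a"
    using assms partner_less by (auto simp: refl_mat_def)
  ultimately show "refl_mat n (l \<cdot>\<^sub>v a) $$ (i, j) = refl_mat n a $$ (i, j)"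
    using assms by (cases "q2 n a = 0") (auto simp: refl_mat_def q2_smult power2_eq_square)
qed (simp_all add: refl_mat_def)

lemma refl_mat_eq_if_minors_vanish:
  assumes a: "a \<in> carrier_vec (2*n+2)" and c: "c \<in> carrier_vec (2*n+2)"
    and qa: "q2 n a \<noteq> 0" and qc: "q2 n c \<noteq> 0"
    and minors: "\<And>r1 r2. r1 < 2*n+2 \<Longrightarrow> r2 < 2*n+2 \<Longrightarrow> c$r1 * a$r2 - a$r1 * c$r2 = 0"
  shows "refl_mat n c = refl_mat n a"
proof -
  obtain i where i: "i < 2*n+2" "a $ i \<noteq> 0"
    using q2_eq_0_if_vanishing qa by blast
  define l where "l = c$i / a$i"
  have cl: "c = l \<cdot>\<^sub>v a"
    unfolding l_def using a c i minors by (rule vec_parallel_if_minors_vanish)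
  with qc q2_smult[OF a, of 0] have "l \<noteq> 0" by auto
  then show ?thesis
    unfolding cl by (rule refl_mat_smult[OF a])
qed

lemma refl_mat_maps_isotropic:
  assumes x: "x \<in> carrier_vec (2*n+2)" and y: "y \<in> carrier_vec (2*n+2)"
    and "q2 n x = 0" "q2 n y = 0" and q: "q2 n (x - y) \<noteq> 0"
  shows "refl_mat n (x - y) *\<^sub>v x = y"
proof -
  have "polar n x (x - y) = q2 n (x - y)"
    using assms by (simp add: polar_diff_right q2_diff polar_self)
  then show ?thesis
    using x y q by (simp add: refl_mat_mult_vec) (auto intro!: eq_vecI)
qed

lemma refl_mat_mult_minus_one_entry:
  assumes a: "a \<in> carrier_vec (2*n+2)" and c: "c \<in> carrier_vec (2*n+2)"
    and r: "r < 2*n+2" and j: "j < 2*n+2"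
  shows "(refl_mat n a * refl_mat n c - 1\<^sub>m (2*n+2)) $$ (r,j)
    = - (c$(partner n j) / q2 n c) * c$r
      - ((a$(partner n j) - c$(partner n j) / q2 n c * polar n c a) / q2 n a) * a$r"
proof -
  let ?e = "unit_vec (2*n+2) j :: 'a vec"
  have e: "?e \<in> carrier_vec (2*n+2)" by simp
  have Re: "refl_mat n c *\<^sub>v ?e \<in> carrier_vec (2*n+2)"
    using refl_mat_carrier e by (rule mult_mat_vec_carrier)
  have P: "refl_mat n a * refl_mat n c \<in> carrier_mat (2*n+2) (2*n+2)"
    using refl_mat_carrier refl_mat_carrier by (rule mult_carrier_mat)
  have "(refl_mat n a * refl_mat n c) $$ (r,j) = ((refl_mat n a * refl_mat n c) *\<^sub>v ?e) $ r"
    using P r j by (simp add: mult_mat_vec_unit_vec_index)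
  also have "\<dots> = (refl_mat n a *\<^sub>v (refl_mat n c *\<^sub>v ?e)) $ r"
    by (metis assoc_mult_mat_vec refl_mat_carrier e)
  also have "refl_mat n a *\<^sub>v (refl_mat n c *\<^sub>v ?e)
      = refl_mat n c *\<^sub>v ?e - (polar n (refl_mat n c *\<^sub>v ?e) a / q2 n a) \<cdot>\<^sub>v a"
    by (rule refl_mat_mult_vec[OF a Re])
  also have "polar n (refl_mat n c *\<^sub>v ?e) a = a$(partner n j) - c$(partner n j) / q2 n c * polar n c a"
    unfolding polar_refl_mat[OF c e] polar_unit_vec[OF j] ..
  also have "refl_mat n c *\<^sub>v ?e = ?e - (c$(partner n j) / q2 n c) \<cdot>\<^sub>v c"
    unfolding refl_mat_mult_vec[OF c e] polar_unit_vec[OF j] ..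
  also have "(?e - (c$(partner n j) / q2 n c) \<cdot>\<^sub>v c
      - ((a$(partner n j) - c$(partner n j) / q2 n c * polar n c a) / q2 n a) \<cdot>\<^sub>v a) $ r
    = (if r = j then 1 else 0) - (c$(partner n j) / q2 n c) * c$r
      - ((a$(partner n j) - c$(partner n j) / q2 n c * polar n c a) / q2 n a) * a$r"
    using a c r j by simp
  finally show ?thesis
    using P r j by simp
qed

lemma rank_refl_mat_mult_minus_one:
  assumes a: "a \<in> carrier_vec (2*n+2)" and c: "c \<in> carrier_vec (2*n+2)"
    and qa: "q2 n a \<noteq> 0" and qc: "q2 n c \<noteq> 0"
    and r: "r1 < 2*n+2" "r2 < 2*n+2" "c$r1 * a$r2 - a$r1 * c$r2 \<noteq> 0"
  shows "vec_space.rank (2*n+2) (refl_mat n a * refl_mat n c - 1\<^sub>m (2*n+2)) = 2"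
proof -
  define w w' where "w j = - (c$(partner n j) / q2 n c)"
    and "w' j = - ((a$(partner n j) - c$(partner n j) / q2 n c * polar n c a) / q2 n a)" for j
  have entries: "(refl_mat n a * refl_mat n c - 1\<^sub>m (2*n+2)) $$ (r,j) = c$r * w j + a$r * w' j"
    if "r < 2*n+2" "j < 2*n+2" for r j
    unfolding refl_mat_mult_minus_one_entry[OF a c that] w_def w'_def by (simp add: algebra_simps)
  have "w (partner n r1) * w' (partner n r2) - w' (partner n r1) * w (partner n r2)
      = (c$r1 * a$r2 - a$r1 * c$r2) / (q2 n a * q2 n c)"
    using r qa qc by (simp add: w_def w'_def partner_partner field_simps)
  then have cols: "w (partner n r1) * w' (partner n r2) - w' (partner n r1) * w (partner n r2) \<noteq> 0"
    using r qa qc by simp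
  have "refl_mat n a * refl_mat n c - 1\<^sub>m (2*n+2) \<in> carrier_mat (2*n+2) (2*n+2)"
    using refl_mat_carrier refl_mat_carrier by (intro minus_carrier_mat mult_carrier_mat one_carrier_mat)
  from rank_sum_of_two_rank_one[OF this entries r partner_less[OF r(1)] partner_less[OF r(2)] cols]
  show ?thesis .
qed

lemma invertible_refl_mat_mult:
  assumes a: "a \<in> carrier_vec (2*n+2)" and c: "c \<in> carrier_vec (2*n+2)"
    and qa: "q2 n a \<noteq> 0" and qc: "q2 n c \<noteq> 0"
  shows "invertible_mat (refl_mat n a * refl_mat n c)"
proof -
  let ?A = "refl_mat n a" and ?C = "refl_mat n c" and ?N = "2*n+2"
  have A: "?A \<in> carrier_mat ?N ?N" and C: "?C \<in> carrier_mat ?N ?N" by (rule refl_mat_carrier)+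
  have AC: "?A * ?C \<in> carrier_mat ?N ?N" and CA: "?C * ?A \<in> carrier_mat ?N ?N"
    using A C by simp_all
  have "(?A * ?C) * (?C * ?A) = ?A * ((?C * ?C) * ?A)"
    using A C by (simp add: assoc_mult_mat[of _ ?N ?N _ ?N _ ?N])
  also have "(?C * ?C) * ?A = ?A"
    unfolding refl_mat_mult_self[OF c qc] using A by simp
  also have "?A * ?A = 1\<^sub>m ?N"
    by (rule refl_mat_mult_self[OF a qa])
  finally show ?thesis
    unfolding invertible_mat_def inverts_mat_def
    using A C AC CA mat_mult_left_right_inverse[OF AC CA] by (auto intro!: exI[of _ "?C * ?A"])
qed

lemma refl_mat_mult_in_SO_odd_image:
  assumes a: "a \<in> carrier_vec (2*n+2)" and c: "c \<in> carrier_vec (2*n+2)"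
    and qa: "q2 n a \<noteq> 0" and qc: "q2 n c \<noteq> 0" and ta: "t2 n a = 0" and tc: "t2 n c = 0"
    and r: "r1 < 2*n+2" "r2 < 2*n+2" "c$r1 * a$r2 - a$r1 * c$r2 \<noteq> 0"
  shows "refl_mat n a * refl_mat n c \<in> SO_odd_image n"
proof -
  let ?A = "refl_mat n a" and ?C = "refl_mat n c" and ?N = "2*n+2"
  have A: "?A \<in> carrier_mat ?N ?N" and C: "?C \<in> carrier_mat ?N ?N" by (rule refl_mat_carrier)+
  have AC: "?A * ?C \<in> carrier_mat ?N ?N"
    using A C by simp
  have mult_vec: "(?A * ?C) *\<^sub>v z = ?A *\<^sub>v (?C *\<^sub>v z)" if "z \<in> carrier_vec ?N" for z
    using A C that by (rule assoc_mult_mat_vec)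
  have "invertible_mat (?A * ?C)"
    using invertible_refl_mat_mult[OF a c qa qc] .
  moreover have "q2 n ((?A * ?C) *\<^sub>v z) = q2 n z" if z: "z \<in> carrier_vec ?N" for z
  proof -
    have Cz: "?C *\<^sub>v z \<in> carrier_vec ?N"
      using C z by (rule mult_mat_vec_carrier)
    show ?thesis
      unfolding mult_vec[OF z] q2_refl_mat[OF a Cz qa] q2_refl_mat[OF c z qc] ..
  qed
  moreover have "vec_space.rank ?N (?A * ?C - 1\<^sub>m ?N) = 2"
    using rank_refl_mat_mult_minus_one[OF a c qa qc r] .
  moreover have "polar n (one_vec n) a = 0" "polar n (one_vec n) c = 0"
    using ta tc by (simp_all only: polar_sym[of n "one_vec n"] polar_one_vec)
  then have "(?A * ?C) *\<^sub>v one_vec n = one_vec n"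
    by (simp add: mult_vec[OF one_vec_carrier] refl_mat_fixes_orthogonal[OF a one_vec_carrier]
        refl_mat_fixes_orthogonal[OF c one_vec_carrier])
  ultimately show ?thesis
    using AC unfolding SO_odd_image_def SO_even_def O_even_def by auto
qed

lemma one_mat_in_SO_odd_image: "1\<^sub>m (2*n+2) \<in> SO_odd_image n"
proof -
  let ?I = "1\<^sub>m (2*n+2) :: 'a mat"
  have "invertible_mat ?I"
    unfolding invertible_mat_def inverts_mat_def by (auto intro!: exI[of _ ?I])
  moreover have "?I - ?I = 0\<^sub>m (2*n+2) (2*n+2)" by simp
  then have "vec_space.rank (2*n+2) (?I - ?I) = 0"
    by (simp only: vec_space.rank_0I)
  ultimately show ?thesis
    using one_mult_mat_vec[OF one_vec_carrier]
    unfolding SO_odd_image_def SO_even_def O_even_def by auto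
qed

section \<open>Choosing the reflection vector\<close>

lemma Q_point_middle_entries_ne:
  assumes x: "x \<in> Q_points n"
    and zero: "\<And>j. j < 2*n+2 \<Longrightarrow> j \<noteq> n \<Longrightarrow> j \<noteq> 2*n+1 \<Longrightarrow> x $ j = 0"
  shows "x $ n \<noteq> x $ (2*n+1)"
proof
  assume eq: "x $ n = x $ (2*n+1)"
  have "q2 n x = (\<Sum>i<n. x$i * x$(n+1+i)) + x$n * x$(2*n+1)"
    by (simp add: q2_def mult_2)
  also have "(\<Sum>i<n. x$i * x$(n+1+i)) = 0"
    using zero by (intro sum.neutral) simp
  finally have "x$n * x$n = 0" "x$n + x$n = 1"
    using Q_pointsD[OF x] eq unfolding t2_def by simp_all
  then show False by simp
qed

lemma exists_t2_kernel_polar_ne_0: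
  assumes x: "x \<in> Q_points n"
  shows "\<exists>p \<in> carrier_vec (2*n+2). t2 n p = 0 \<and> polar n p x \<noteq> 0"
proof (cases "\<exists>j < 2*n+2. j \<noteq> n \<and> j \<noteq> 2*n+1 \<and> x $ j \<noteq> 0")
  case True
  then obtain j where j: "j < 2*n+2" "j \<noteq> n" "j \<noteq> 2*n+1" "x $ j \<noteq> 0" by blast
  then have pj: "partner n j < 2*n+2" "partner n j \<noteq> n" "partner n j \<noteq> 2*n+1"
    unfolding partner_def by auto
  then have "t2 n (unit_vec (2*n+2) (partner n j)) = 0"
    "polar n (unit_vec (2*n+2) (partner n j)) x = x $ j"
    unfolding t2_unit_vec[OF pj(1)] polar_unit_vec[OF pj(1)]
    using j(1) by (simp_all add: partner_partner)
  with j show ?thesis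
    by (intro bexI[of _ "unit_vec (2*n+2) (partner n j)"]) simp_all
next
  case False
  let ?p = "unit_vec (2*n+2) n - unit_vec (2*n+2) (2*n+1) :: 'a vec"
  have "n < 2*n+2" "2*n+1 < 2*n+2" "partner n n = 2*n+1" "partner n (2*n+1) = n"
    unfolding partner_def by auto
  then have "polar n ?p x = x$(2*n+1) - x$n"
    by (simp only: polar_diff_left[OF unit_vec_carrier unit_vec_carrier] polar_unit_vec)
  moreover have "x $ n \<noteq> x $ (2*n+1)"
    using False by (intro Q_point_middle_entries_ne[OF x]) blast
  moreover have "t2 n ?p = 0" by (simp add: t2_def)
  ultimately show ?thesis
    by (intro bexI[of _ ?p]) simp_all
qed

lemma exists_t2_kernel_q2_plus_polar_sq_ne_0:
  assumes n: "n > 0"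
  shows "\<exists>v \<in> carrier_vec (2*n+2). t2 n v = 0 \<and> q2 n v + (polar n v y)^2 \<noteq> (0::'a::field)"
proof -
  let ?e = "unit_vec (2*n+2) :: nat \<Rightarrow> 'a vec"
  have idx: "0 < 2*n+2" "n+1 < 2*n+2" "partner n 0 = n+1" "partner n (n+1) = 0"
    using n unfolding partner_def by auto
  have e: "t2 n (?e 0) = 0" "t2 n (?e (n+1)) = 0" "q2 n (?e 0) = 0" "q2 n (?e (n+1)) = 0"
    "polar n (?e 0) y = y$(n+1)" "polar n (?e (n+1)) y = y$0"
    unfolding t2_unit_vec[OF idx(1)] t2_unit_vec[OF idx(2)] q2_unit_vec
      polar_unit_vec[OF idx(1)] polar_unit_vec[OF idx(2)] idx(3,4)
    using n by simp_all
  show ?thesis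
  proof (cases "y$(n+1) \<noteq> 0 \<or> y$0 \<noteq> 0")
    case True
    then consider "y$(n+1) \<noteq> 0" | "y$0 \<noteq> 0" by blast
    then show ?thesis
    proof cases
      case 1
      then show ?thesis using e by (intro bexI[of _ "?e 0"]) simp_all
    next
      case 2
      then show ?thesis using e by (intro bexI[of _ "?e (n+1)"]) simp_all
    qed
  next
    case False
    have "polar n (?e 0) (?e (n+1)) = 1"
      unfolding polar_unit_vec[OF idx(1)] idx(3) using idx(2) by simp
    then have "q2 n (?e 0 + ?e (n+1)) = 1" "polar n (?e 0 + ?e (n+1)) y = 0"
      "t2 n (?e 0 + ?e (n+1)) = 0"
      using False e by (simp_all add: q2_add polar_add_left t2_def)
    then show ?thesis
      by (intro bexI[of _ "?e 0 + ?e (n+1)"]) simp_all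
  qed
qed

text \<open>The vector a is the projection of v to the orthogonal complement of span {1, y}.\<close>

lemma project_orthogonal_to_Q_point:
  assumes y: "y \<in> Q_points n" and v: "v \<in> carrier_vec (2*n+2)" "t2 n v = 0"
  defines "b \<equiv> polar n v y"
  defines "a \<equiv> v - b \<cdot>\<^sub>v one_vec n + (2 * b) \<cdot>\<^sub>v y"
  shows "a \<in> carrier_vec (2*n+2)" "t2 n a = 0" "polar n a y = 0" "q2 n a = q2 n v + b^2"
proof -
  note y = Q_pointsD[OF y]
  define w where "w = v - b \<cdot>\<^sub>v one_vec n"
  have bo: "b \<cdot>\<^sub>v one_vec n \<in> carrier_vec (2*n+2)"
    using one_vec_carrier by (rule smult_carrier_vec[THEN iffD2])
  have yb: "(2 * b) \<cdot>\<^sub>v y \<in> carrier_vec (2*n+2)"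
    using y(1) by (rule smult_carrier_vec[THEN iffD2])
  have w: "w \<in> carrier_vec (2*n+2)"
    unfolding w_def using v(1) bo by (rule minus_carrier_vec)
  have "polar n (one_vec n) y = 1"
    using y(4) by (simp only: polar_sym)
  then have wy: "polar n w y = 0"
    unfolding w_def polar_diff_left[OF v(1) bo] polar_smult_left[OF one_vec_carrier]
    by (simp add: b_def)
  have qw: "q2 n w = q2 n v + b^2"
    unfolding w_def q2_diff[OF v(1) bo] q2_smult[OF one_vec_carrier]
      polar_smult_right[OF one_vec_carrier] polar_one_vec v(2) q2_one_vec
    by simp
  have tw: "t2 n w = - 2 * b"
    unfolding w_def t2_diff[OF v(1) bo] t2_smult[OF one_vec_carrier] t2_one_vec v(2) by simp
  have a: "a = w + (2 * b) \<cdot>\<^sub>v y"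
    unfolding a_def w_def ..
  show "a \<in> carrier_vec (2*n+2)"
    unfolding a using w yb by (rule add_carrier_vec)
  show "t2 n a = 0"
    unfolding a t2_add[OF w yb] t2_smult[OF y(1)] y(3) tw by simp
  show "polar n a y = 0"
    unfolding a polar_add_left[OF w yb] polar_smult_left[OF y(1)] wy polar_self y(2) by simp
  show "q2 n a = q2 n v + b^2"
    unfolding a q2_add[OF w yb] q2_smult[OF y(1)] polar_smult_right[OF y(1)] wy y(2) qw by simp
qed

lemma exists_anisotropic_orthogonal:
  assumes n: "n > 0" and y: "y \<in> Q_points n"
  shows "\<exists>a \<in> carrier_vec (2*n+2). t2 n a = 0 \<and> polar n a y = 0 \<and> q2 n a \<noteq> 0"
proof -
  obtain v where v: "v \<in> carrier_vec (2*n+2)" "t2 n v = 0" "q2 n v + (polar n v y)^2 \<noteq> 0"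
    using exists_t2_kernel_q2_plus_polar_sq_ne_0[OF n] by blast
  show ?thesis
    using project_orthogonal_to_Q_point[OF y v(1,2)] v(3)
    by (intro bexI[of _ "v - polar n v y \<cdot>\<^sub>v one_vec n + (2 * polar n v y) \<cdot>\<^sub>v y"]) simp_all
qed

lemma exists_reflection_vector:
  assumes inf: "infinite (UNIV :: 'a::field set)" and n: "n > 0"
    and x: "x \<in> (Q_points n :: 'a vec set)" and y: "y \<in> Q_points n"
  shows "\<exists>a \<in> carrier_vec (2*n+2). t2 n a = 0 \<and> q2 n a \<noteq> 0
           \<and> polar n a x * polar n a y \<noteq> polar n x y * q2 n a"
proof (cases "polar n x y = 0")
  case True
  define H where "H = {z \<in> carrier_vec (2*n+2). t2 n z = (0::'a)}"
  have H: "H \<subseteq> carrier_vec (2*n+2)" "\<And>p r t. p \<in> H \<Longrightarrow> r \<in> H \<Longrightarrow> p + t \<cdot>\<^sub>v (r - p) \<in> H"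
    unfolding H_def using t2_line_eq_0 by auto
  obtain px py where "px \<in> H" "polar n px x \<noteq> 0" "py \<in> H" "polar n py y \<noteq> 0"
    using exists_t2_kernel_polar_ne_0[OF x] exists_t2_kernel_polar_ne_0[OF y] unfolding H_def by blast
  then obtain z1 where "z1 \<in> H" "polar n z1 x * polar n z1 y \<noteq> 0"
    using exists_common_nonzero[OF inf poly_on_lines_polar poly_on_lines_polar H] by force
  moreover obtain z0 where "z0 \<in> H" "q2 n z0 \<noteq> 0"
    using exists_anisotropic_orthogonal[OF n y] unfolding H_def by blast
  ultimately obtain a where "a \<in> H" "q2 n a \<noteq> 0" "polar n a x * polar n a y \<noteq> 0"
    using exists_common_nonzero[OF inf poly_on_lines_q2
        poly_on_lines_mult[OF poly_on_lines_polar poly_on_lines_polar] H] by blast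
  then show ?thesis
    using True unfolding H_def by auto
next
  case False
  then show ?thesis
    using exists_anisotropic_orthogonal[OF n y] by fastforce
qed

lemma exists_SO_odd_image_map_of_reflection_vector:
  assumes x: "x \<in> Q_points n" and y: "y \<in> Q_points n" and "x \<noteq> y"
    and a: "a \<in> carrier_vec (2*n+2)" and ta: "t2 n a = 0" and qa: "q2 n a \<noteq> 0"
    and choice: "polar n a x * polar n a y \<noteq> polar n x y * q2 n a"
  shows "\<exists>M \<in> SO_odd_image n. M *\<^sub>v x = y"
proof -
  note x = Q_pointsD[OF x] and y = Q_pointsD[OF y]
  define y' where "y' = refl_mat n a *\<^sub>v y"
  define c where "c = x - y'"
  have y': "y' \<in> carrier_vec (2*n+2)" "q2 n y' = 0" "t2 n y' = 1"
    unfolding y'_def q2_refl_mat[OF a y(1) qa] t2_refl_mat[OF a y(1)]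
    using refl_mat_carrier y(1,2,3) ta by (auto intro: mult_mat_vec_carrier)
  have cc: "c \<in> carrier_vec (2*n+2)" and tc: "t2 n c = 0"
    unfolding c_def using x y' by (simp_all add: t2_diff)
  have "polar n x y' = polar n x y - polar n y a / q2 n a * polar n a x"
    unfolding y'_def using a y(1) by (simp add: polar_sym[of n x] polar_refl_mat)
  then have qc: "q2 n c \<noteq> 0"
    unfolding c_def using x y' qa choice
    by (auto simp: q2_diff polar_sym[of n y a] field_simps)
  let ?M = "refl_mat n a * refl_mat n c"
  have M: "?M *\<^sub>v z = refl_mat n a *\<^sub>v (refl_mat n c *\<^sub>v z)" if "z \<in> carrier_vec (2*n+2)" for z
    using refl_mat_carrier refl_mat_carrier that by (rule assoc_mult_mat_vec)
  have "refl_mat n c *\<^sub>v x = y'"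
    unfolding c_def using x y' qc c_def by (intro refl_mat_maps_isotropic) auto
  then have Mx: "?M *\<^sub>v x = y"
    unfolding M[OF x(1)] y'_def using refl_mat_involutive[OF a y(1) qa] by simp
  obtain r1 r2 where r: "r1 < 2*n+2" "r2 < 2*n+2" "c$r1 * a$r2 - a$r1 * c$r2 \<noteq> 0"
  proof (rule ccontr)
    assume "\<not> thesis"
    with that have "refl_mat n c = refl_mat n a"
      using refl_mat_eq_if_minors_vanish[OF a cc qa qc] by blast
    then have "?M *\<^sub>v x = x"
      unfolding M[OF x(1)] using refl_mat_involutive[OF a x(1) qa] by simp
    with Mx \<open>x \<noteq> y\<close> show False by simp
  qed
  have "?M \<in> SO_odd_image n"
    using refl_mat_mult_in_SO_odd_image[OF a cc qa qc ta tc r] .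
  with Mx show ?thesis by blast
qed

theorem proposition2p10:
  fixes n :: nat
  assumes "infinite (UNIV :: 'a::field set)"
    and "n > 0"
    and "x \<in> (Q_points n :: 'a vec set)" and "y \<in> Q_points n"
  shows "\<exists>M \<in> SO_odd_image n. M *\<^sub>v x = y"
proof (cases "x = y")
  case True
  then show ?thesis
    using one_mat_in_SO_odd_image Q_pointsD(1)[OF assms(3)] by force
next
  case False
  obtain a where "a \<in> carrier_vec (2*n+2)" "t2 n a = 0" "q2 n a \<noteq> 0"
    "polar n a x * polar n a y \<noteq> polar n x y * q2 n a"
    using exists_reflection_vector[OF assms] by blast
  then show ?thesis
    using exists_SO_odd_image_map_of_reflection_vector[OF assms(3,4) False] by blast
qed

end
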